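(* The set $\mathcal{D}$ of directed-convex polyominoes equals $Av_{\mathfrak{P}}(H,V,D)$, where $H=\begin{bmatrix}1&0&1\end{bmatrix}$, $V=\begin{bmatrix}1\\0\\1\end{bmatrix}$ and $D=\begin{bmatrix}1&1\\0&1\end{bmatrix}$.
   Context: A polyomino is a finite union of unit cells of $\mathbb{Z}\times\mathbb{Z}$ that is connected via edge adjacency, up to translation, identified with the binary matrix of its minimal bounding rectangle (entry $1$ iff the corresponding unit square is a cell; rows numbered bottom to top, and in displayed matrices the first written row is the top row). A matrix is a submatrix of another if obtained by deleting rows and/or columns; $Av_{\mathfrak{P}}(\mathcal{M})$ is the set of polyominoes with no submatrix in $\mathcal{M}$. A polyomino is convex if each of its rows and each of its columns is connected. An (internal) path of a polyomino is a sequence of distinct cells $(c_1,\dots,c_n)$ of the polyomino in which consecutive cells share an edge; the pair $(c_i,c_{i+1})$ is a north, south, east or west step according to the position of $c_{i+1}$ relative to $c_i$. A polyomino is directed if there is a cell (the source) from which every cell can be reached by a path using only north and east steps. A directed-convex polyomino is a polyomino that is both directed and convex. *)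

theory Defs
  imports Main
begin

type_synonym cell = "int \<times> int"   \<comment> \<open>(column x, row y); rows numbered bottom to top\<close>

definition adjacent :: "cell \<Rightarrow> cell \<Rightarrow> bool" where
  "adjacent a b \<longleftrightarrow> \<bar>fst a - fst b\<bar> + \<bar>snd a - snd b\<bar> = 1"

definition polyomino :: "cell set \<Rightarrow> bool" where
  "polyomino P \<longleftrightarrow> finite P \<and> P \<noteq> {} \<and>
     (\<forall>a\<in>P. \<forall>b\<in>P. (\<lambda>u v. u \<in> P \<and> v \<in> P \<and> adjacent u v)\<^sup>*\<^sup>* a b)"

text \<open>Binary matrix: list of rows, first row = top row; all rows of equal length.\<close>
type_synonym bmatrix = "bool list list"

text \<open>Submatrix containment: choose rows (top to bottom, i.e. strictly decreasing y)
  and columns (left to right, strictly increasing x) within the minimal bounding rectangle.\<close>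
definition contains :: "cell set \<Rightarrow> bmatrix \<Rightarrow> bool" where
  "contains P M \<longleftrightarrow> (\<exists>ys xs.
     length ys = length M \<and> (\<forall>r\<in>set M. length r = length xs) \<and>
     sorted_wrt (>) ys \<and> sorted_wrt (<) xs \<and>
     set ys \<subseteq> {Min (snd ` P)..Max (snd ` P)} \<and>
     set xs \<subseteq> {Min (fst ` P)..Max (fst ` P)} \<and>
     (\<forall>i<length ys. \<forall>j<length xs. M ! i ! j = ((xs ! j, ys ! i) \<in> P)))"

definition Av :: "bmatrix set \<Rightarrow> cell set set" where
  "Av \<M> = {P. polyomino P \<and> (\<forall>M\<in>\<M>. \<not> contains P M)}"

definition convex :: "cell set \<Rightarrow> bool" where
  "convex P \<longleftrightarrow>
     (\<forall>x1 x2 x y. (x1, y) \<in> P \<and> (x2, y) \<in> P \<and> x1 \<le> x \<and> x \<le> x2 \<longrightarrow> (x, y) \<in> P) \<and>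
     (\<forall>y1 y2 x y. (x, y1) \<in> P \<and> (x, y2) \<in> P \<and> y1 \<le> y \<and> y \<le> y2 \<longrightarrow> (x, y) \<in> P)"

definition ne_step :: "cell set \<Rightarrow> cell \<Rightarrow> cell \<Rightarrow> bool" where
  "ne_step P a b \<longleftrightarrow> a \<in> P \<and> b \<in> P \<and>
     (b = (fst a, snd a + 1) \<or> b = (fst a + 1, snd a))"

definition directed :: "cell set \<Rightarrow> bool" where
  "directed P \<longleftrightarrow> (\<exists>s\<in>P. \<forall>c\<in>P. (ne_step P)\<^sup>*\<^sup>* s c)"

definition directed_convex_polyominoes :: "cell set set" where
  "directed_convex_polyominoes = {P. polyomino P \<and> directed P \<and> convex P}"

definition H_pat :: bmatrix where "H_pat = [[True, False, True]]"
definition V_pat :: bmatrix where "V_pat = [[True], [False], [True]]"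
definition D_pat :: bmatrix where "D_pat = [[True, True], [False, True]]"

end

theory Submission
  imports Defs
begin

text \<open>Forbidding H and V is exactly row and column convexity. In a directed convex polyomino a
  north-east path from the source to a cell (x1, y1) crosses every lower row y2 to the left of x1,
  so any cell (x2, y2) with x1 \<le> x2 forces (x1, y2) by row convexity; hence D never occurs.
  Conversely, if P is convex and avoids D, a cell with neither a west nor a south neighbour must be
  the leftmost cell of the bottom row: a lower cell would be joined to it by a path crossing into
  its row through some vertical domino, which together with row convexity produces a copy of D.
  So all cells but one have a west or south neighbour, and descending along such neighbours
  reaches that one cell, which is therefore a source.\<close>

lemma length_eq_1_conv: "length xs = 1 \<longleftrightarrow> (\<exists>a. xs = [a])"
  by (auto simp: length_Suc_conv)

lemma length_eq_2_conv: "length xs = 2 \<longleftrightarrow> (\<exists>a b. xs = [a, b])"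
  by (auto simp: numeral_2_eq_2 length_Suc_conv)

lemma length_eq_3_conv: "length xs = 3 \<longleftrightarrow> (\<exists>a b c. xs = [a, b, c])"
  by (auto simp: numeral_3_eq_3 length_Suc_conv)

lemma gap_free_lines_iff:
  fixes R :: "'a::linorder \<Rightarrow> 'b \<Rightarrow> bool"
  shows "(\<forall>a b x y. R a y \<and> R b y \<and> a \<le> x \<and> x \<le> b \<longrightarrow> R x y) \<longleftrightarrow>
    \<not> (\<exists>y a x b. a < x \<and> x < b \<and> R a y \<and> \<not> R x y \<and> R b y)"
proof
  assume "\<forall>a b x y. R a y \<and> R b y \<and> a \<le> x \<and> x \<le> b \<longrightarrow> R x y"
  then show "\<not> (\<exists>y a x b. a < x \<and> x < b \<and> R a y \<and> \<not> R x y \<and> R b y)"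
    using less_imp_le by blast
next
  assume gap_free: "\<not> (\<exists>y a x b. a < x \<and> x < b \<and> R a y \<and> \<not> R x y \<and> R b y)"
  show "\<forall>a b x y. R a y \<and> R b y \<and> a \<le> x \<and> x \<le> b \<longrightarrow> R x y"
  proof (intro allI impI)
    fix a b x y assume between: "R a y \<and> R b y \<and> a \<le> x \<and> x \<le> b"
    show "R x y"
    proof (cases "a < x \<and> x < b")
      case True
      with gap_free between show ?thesis by blast
    next
      case False
      with between have "x = a \<or> x = b" by auto
      with between show ?thesis by auto
    qed
  qed
qed

lemma contains_1x3_iff:
  "contains P [[a, b, c]] \<longleftrightarrow> (\<exists>y x1 x2 x3. x1 < x2 \<and> x2 < x3 \<and>
     y \<in> {Min (snd ` P)..Max (snd ` P)} \<and> {x1, x2, x3} \<subseteq> {Min (fst ` P)..Max (fst ` P)} \<and>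
     a = ((x1, y) \<in> P) \<and> b = ((x2, y) \<in> P) \<and> c = ((x3, y) \<in> P))" (is "_ \<longleftrightarrow> ?rhs")
proof
  assume "contains P [[a, b, c]]"
  then obtain ys xs where shape: "length ys = length [[a, b, c]]"
    "\<forall>r\<in>set [[a, b, c]]. length r = length xs"
    and sorted: "sorted_wrt (<) xs"
    and box: "set ys \<subseteq> {Min (snd ` P)..Max (snd ` P)}" "set xs \<subseteq> {Min (fst ` P)..Max (fst ` P)}"
    and entries: "\<forall>i<length ys. \<forall>j<length xs. [[a, b, c]] ! i ! j = ((xs ! j, ys ! i) \<in> P)"
    unfolding contains_def by blast
  from shape have "length ys = 1" "length xs = 3" by simp_all
  then obtain y x1 x2 x3 where [simp]: "ys = [y]" "xs = [x1, x2, x3]"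
    unfolding length_eq_1_conv length_eq_3_conv by blast
  have "a = ((x1, y) \<in> P)" "b = ((x2, y) \<in> P)" "c = ((x3, y) \<in> P)"
    using entries[rule_format, of 0 0] entries[rule_format, of 0 1] entries[rule_format, of 0 2]
    by simp_all
  moreover have "x1 < x2" "x2 < x3" using sorted by simp_all
  ultimately show ?rhs using box by auto
next
  assume ?rhs
  then obtain y x1 x2 x3 where "x1 < x2" "x2 < x3" "y \<in> {Min (snd ` P)..Max (snd ` P)}"
    "{x1, x2, x3} \<subseteq> {Min (fst ` P)..Max (fst ` P)}"
    "a = ((x1, y) \<in> P)" "b = ((x2, y) \<in> P)" "c = ((x3, y) \<in> P)" by blast
  then show "contains P [[a, b, c]]" unfolding contains_def
    by (intro exI[of _ "[y]"] exI[of _ "[x1, x2, x3]"]) (simp add: All_less_Suc2 numeral_3_eq_3)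
qed

lemma contains_3x1_iff:
  "contains P [[a], [b], [c]] \<longleftrightarrow> (\<exists>x y1 y2 y3. y2 < y1 \<and> y3 < y2 \<and>
     x \<in> {Min (fst ` P)..Max (fst ` P)} \<and> {y1, y2, y3} \<subseteq> {Min (snd ` P)..Max (snd ` P)} \<and>
     a = ((x, y1) \<in> P) \<and> b = ((x, y2) \<in> P) \<and> c = ((x, y3) \<in> P))" (is "_ \<longleftrightarrow> ?rhs")
proof
  assume "contains P [[a], [b], [c]]"
  then obtain ys xs where shape: "length ys = length [[a], [b], [c]]"
    "\<forall>r\<in>set [[a], [b], [c]]. length r = length xs"
    and sorted: "sorted_wrt (>) ys"
    and box: "set ys \<subseteq> {Min (snd ` P)..Max (snd ` P)}" "set xs \<subseteq> {Min (fst ` P)..Max (fst ` P)}"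
    and entries: "\<forall>i<length ys. \<forall>j<length xs. [[a], [b], [c]] ! i ! j = ((xs ! j, ys ! i) \<in> P)"
    unfolding contains_def by blast
  from shape have "length ys = 3" "length xs = 1" by simp_all
  then obtain x y1 y2 y3 where [simp]: "xs = [x]" "ys = [y1, y2, y3]"
    unfolding length_eq_1_conv length_eq_3_conv by blast
  have "a = ((x, y1) \<in> P)" "b = ((x, y2) \<in> P)" "c = ((x, y3) \<in> P)"
    using entries[rule_format, of 0 0] entries[rule_format, of 1 0] entries[rule_format, of 2 0]
    by simp_all
  moreover have "y2 < y1" "y3 < y2" using sorted by simp_all
  ultimately show ?rhs using box by auto
next
  assume ?rhs
  then obtain x y1 y2 y3 where "y2 < y1" "y3 < y2" "x \<in> {Min (fst ` P)..Max (fst ` P)}"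
    "{y1, y2, y3} \<subseteq> {Min (snd ` P)..Max (snd ` P)}"
    "a = ((x, y1) \<in> P)" "b = ((x, y2) \<in> P)" "c = ((x, y3) \<in> P)" by blast
  then show "contains P [[a], [b], [c]]" unfolding contains_def
    by (intro exI[of _ "[y1, y2, y3]"] exI[of _ "[x]"]) (simp add: All_less_Suc2 numeral_3_eq_3)
qed

lemma contains_2x2_iff:
  "contains P [[a, b], [c, d]] \<longleftrightarrow> (\<exists>x1 x2 y1 y2. x1 < x2 \<and> y2 < y1 \<and>
     {x1, x2} \<subseteq> {Min (fst ` P)..Max (fst ` P)} \<and> {y1, y2} \<subseteq> {Min (snd ` P)..Max (snd ` P)} \<and>
     a = ((x1, y1) \<in> P) \<and> b = ((x2, y1) \<in> P) \<and> c = ((x1, y2) \<in> P) \<and> d = ((x2, y2) \<in> P))"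
  (is "_ \<longleftrightarrow> ?rhs")
proof
  assume "contains P [[a, b], [c, d]]"
  then obtain ys xs where shape: "length ys = length [[a, b], [c, d]]"
    "\<forall>r\<in>set [[a, b], [c, d]]. length r = length xs"
    and sorted: "sorted_wrt (<) xs" "sorted_wrt (>) ys"
    and box: "set ys \<subseteq> {Min (snd ` P)..Max (snd ` P)}" "set xs \<subseteq> {Min (fst ` P)..Max (fst ` P)}"
    and entries: "\<forall>i<length ys. \<forall>j<length xs. [[a, b], [c, d]] ! i ! j = ((xs ! j, ys ! i) \<in> P)"
    unfolding contains_def by blast
  from shape have "length ys = 2" "length xs = 2" by simp_all
  then obtain x1 x2 y1 y2 where [simp]: "xs = [x1, x2]" "ys = [y1, y2]"
    unfolding length_eq_2_conv by blast
  have "a = ((x1, y1) \<in> P)" "b = ((x2, y1) \<in> P)" "c = ((x1, y2) \<in> P)" "d = ((x2, y2) \<in> P)"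
    using entries[rule_format, of 0 0] entries[rule_format, of 0 1]
      entries[rule_format, of 1 0] entries[rule_format, of 1 1]
    by simp_all
  moreover have "x1 < x2" "y2 < y1" using sorted by simp_all
  ultimately show ?rhs using box by auto
next
  assume ?rhs
  then obtain x1 x2 y1 y2 where "x1 < x2" "y2 < y1"
    "{x1, x2} \<subseteq> {Min (fst ` P)..Max (fst ` P)}" "{y1, y2} \<subseteq> {Min (snd ` P)..Max (snd ` P)}"
    "a = ((x1, y1) \<in> P)" "b = ((x2, y1) \<in> P)" "c = ((x1, y2) \<in> P)" "d = ((x2, y2) \<in> P)"
    by blast
  then show "contains P [[a, b], [c, d]]" unfolding contains_def
    by (intro exI[of _ "[y1, y2]"] exI[of _ "[x1, x2]"]) (simp add: All_less_Suc2 numeral_2_eq_2)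
qed

lemma mem_bounding_box:
  assumes "finite P" "(x, y) \<in> P"
  shows "x \<in> {Min (fst ` P)..Max (fst ` P)}" "y \<in> {Min (snd ` P)..Max (snd ` P)}"
  using assms by (force intro: Min_le Max_ge)+

lemma contains_H_pat_iff:
  assumes "finite P"
  shows "contains P H_pat \<longleftrightarrow>
    (\<exists>y x1 x2 x3. x1 < x2 \<and> x2 < x3 \<and> (x1, y) \<in> P \<and> (x2, y) \<notin> P \<and> (x3, y) \<in> P)"
  (is "_ \<longleftrightarrow> ?gap")
proof
  assume ?gap
  then obtain y x1 x2 x3 where gap: "x1 < x2" "x2 < x3" "(x1, y) \<in> P" "(x2, y) \<notin> P" "(x3, y) \<in> P"
    by blast
  with mem_bounding_box[OF assms] have "x2 \<in> {Min (fst ` P)..Max (fst ` P)}"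
    by (meson atLeastAtMost_iff less_imp_le order_trans)
  with gap mem_bounding_box[OF assms] show "contains P H_pat"
    unfolding H_pat_def contains_1x3_iff by blast
qed (auto simp: H_pat_def contains_1x3_iff)

lemma contains_V_pat_iff:
  assumes "finite P"
  shows "contains P V_pat \<longleftrightarrow>
    (\<exists>x y1 y2 y3. y1 < y2 \<and> y2 < y3 \<and> (x, y1) \<in> P \<and> (x, y2) \<notin> P \<and> (x, y3) \<in> P)"
  (is "_ \<longleftrightarrow> ?gap")
proof
  assume ?gap
  then obtain x y1 y2 y3 where gap: "y1 < y2" "y2 < y3" "(x, y1) \<in> P" "(x, y2) \<notin> P" "(x, y3) \<in> P"
    by blast
  with mem_bounding_box[OF assms] have "y2 \<in> {Min (snd ` P)..Max (snd ` P)}"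
    by (meson atLeastAtMost_iff less_imp_le order_trans)
  with gap mem_bounding_box[OF assms] show "contains P V_pat"
    unfolding V_pat_def contains_3x1_iff by blast
qed (auto simp: V_pat_def contains_3x1_iff)

lemma contains_D_pat_iff:
  assumes "finite P"
  shows "contains P D_pat \<longleftrightarrow> (\<exists>x1 x2 y1 y2. x1 < x2 \<and> y2 < y1 \<and>
    (x1, y1) \<in> P \<and> (x2, y1) \<in> P \<and> (x1, y2) \<notin> P \<and> (x2, y2) \<in> P)"
  using mem_bounding_box[OF assms] unfolding D_pat_def contains_2x2_iff by blast

lemma convex_iff_avoids_H_V:
  assumes "finite P"
  shows "convex P \<longleftrightarrow> \<not> contains P H_pat \<and> \<not> contains P V_pat"
proof -
  have rows: "(\<forall>x1 x2 x y. (x1, y) \<in> P \<and> (x2, y) \<in> P \<and> x1 \<le> x \<and> x \<le> x2 \<longrightarrow> (x, y) \<in> P) \<longleftrightarrow>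
    \<not> (\<exists>y x1 x2 x3. x1 < x2 \<and> x2 < x3 \<and> (x1, y) \<in> P \<and> (x2, y) \<notin> P \<and> (x3, y) \<in> P)"
    by (rule gap_free_lines_iff)
  have columns: "(\<forall>y1 y2 x y. (x, y1) \<in> P \<and> (x, y2) \<in> P \<and> y1 \<le> y \<and> y \<le> y2 \<longrightarrow> (x, y) \<in> P) \<longleftrightarrow>
    \<not> (\<exists>x y1 y2 y3. y1 < y2 \<and> y2 < y3 \<and> (x, y1) \<in> P \<and> (x, y2) \<notin> P \<and> (x, y3) \<in> P)"
    using gap_free_lines_iff[where R = "\<lambda>y x. (x, y) \<in> P"] by blast
  show ?thesis
    unfolding convex_def contains_H_pat_iff[OF assms] contains_V_pat_iff[OF assms] rows columns ..
qed

lemma ne_path_mono: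
  "(ne_step P)\<^sup>*\<^sup>* u v \<Longrightarrow> fst u \<le> fst v \<and> snd u \<le> snd v"
  by (induction rule: rtranclp_induct) (auto simp: ne_step_def)

lemma ne_path_crosses_row:
  assumes "(ne_step P)\<^sup>*\<^sup>* u v" "u \<in> P" "snd u \<le> y" "y \<le> snd v"
  shows "\<exists>x. fst u \<le> x \<and> x \<le> fst v \<and> (x, y) \<in> P"
  using assms
proof (induction arbitrary: y rule: rtranclp_induct)
  case base
  then show ?case by (intro exI[of _ "fst u"]) auto
next
  case (step w v)
  show ?case
  proof (cases "y \<le> snd w")
    case True
    with step obtain x where "fst u \<le> x" "x \<le> fst w" "(x, y) \<in> P" by auto
    moreover have "fst w \<le> fst v" using step.hyps(2) by (auto simp: ne_step_def)
    ultimately show ?thesis by auto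
  next
    case False
    with step.hyps(2) step.prems(3) have "v = (fst w, y)" "v \<in> P"
      by (auto simp: ne_step_def)
    moreover have "fst u \<le> fst w" using ne_path_mono[OF step.hyps(1)] by simp
    ultimately show ?thesis by (intro exI[of _ "fst v"]) auto
  qed
qed

lemma directed_convex_fills_below:
  assumes "directed P" "convex P"
    and "(x1, y1) \<in> P" "(x2, y2) \<in> P" "x1 \<le> x2" "y2 \<le> y1"
  shows "(x1, y2) \<in> P"
proof -
  obtain s where s: "s \<in> P" "\<forall>c\<in>P. (ne_step P)\<^sup>*\<^sup>* s c"
    using assms(1) unfolding directed_def by blast
  have "snd s \<le> y2" using ne_path_mono s assms(4) by fastforce
  then obtain x where "x \<le> x1" "(x, y2) \<in> P"
    using ne_path_crosses_row[of P s "(x1, y1)" y2] s assms(3,6) by auto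
  with assms(2,4,5) show ?thesis unfolding convex_def by blast
qed

lemma adjacent_path_crosses_row:
  assumes "(\<lambda>u v. u \<in> P \<and> v \<in> P \<and> adjacent u v)\<^sup>*\<^sup>* u v" "snd u < b" "b \<le> snd v"
  shows "\<exists>x. (x, b - 1) \<in> P \<and> (x, b) \<in> P"
  using assms
proof (induction rule: rtranclp_induct)
  case (step w v)
  show ?case
  proof (cases "b \<le> snd w")
    case False
    with step have "v = (fst w, b)" "w = (fst w, b - 1)" "v \<in> P" "w \<in> P"
      by (auto simp: adjacent_def prod_eq_iff)
    then show ?thesis by metis
  qed (use step in auto)
qed simp

lemma corner_is_bottom_left:
  assumes pol: "polyomino P" and cv: "convex P"
    and no_D: "\<And>x1 x2 y1 y2. \<lbrakk>x1 < x2; y2 < y1; (x1, y1) \<in> P; (x2, y1) \<in> P; (x2, y2) \<in> P\<rbrakk>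
                \<Longrightarrow> (x1, y2) \<in> P"
    and c: "(a, b) \<in> P" and no_west: "(a - 1, b) \<notin> P" and no_south: "(a, b - 1) \<notin> P"
  shows "\<forall>x. (x, b) \<in> P \<longrightarrow> a \<le> x" and "\<forall>p\<in>P. b \<le> snd p"
proof -
  show leftmost: "\<forall>x. (x, b) \<in> P \<longrightarrow> a \<le> x"
    using cv c no_west unfolding convex_def by (smt (verit))
  show "\<forall>p\<in>P. b \<le> snd p"
  proof (rule ccontr)
    assume "\<not> (\<forall>p\<in>P. b \<le> snd p)"
    then obtain p where "p \<in> P" "snd p < b" by auto
    moreover have "(\<lambda>u v. u \<in> P \<and> v \<in> P \<and> adjacent u v)\<^sup>*\<^sup>* p (a, b)"
      using pol \<open>p \<in> P\<close> c unfolding polyomino_def by blast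
    ultimately obtain x where x: "(x, b - 1) \<in> P" "(x, b) \<in> P"
      using adjacent_path_crosses_row by fastforce
    have "a \<le> x" using leftmost x(2) by blast
    moreover have "x \<noteq> a" using x(1) no_south by blast
    ultimately have "a < x" by simp
    with no_D[OF _ _ c x(2) x(1)] no_south show False by simp
  qed
qed

lemma ne_reachable_by_predecessors:
  assumes min: "\<And>c. c \<in> P \<Longrightarrow> fst s + snd s \<le> fst c + snd c"
    and pred: "\<And>c. \<lbrakk>c \<in> P; c \<noteq> s\<rbrakk> \<Longrightarrow> (fst c - 1, snd c) \<in> P \<or> (fst c, snd c - 1) \<in> P"
    and "c \<in> P"
  shows "(ne_step P)\<^sup>*\<^sup>* s c"
  using \<open>c \<in> P\<close>
proof (induction "nat (fst c + snd c - (fst s + snd s))" arbitrary: c rule: less_induct)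
  case less
  show ?case
  proof (cases "c = s")
    case False
    then obtain p where "p \<in> P" "ne_step P p c" "fst p + snd p = fst c + snd c - 1"
      using pred[OF less.prems False] less.prems by (elim disjE) (force simp: ne_step_def)+
    moreover have "(ne_step P)\<^sup>*\<^sup>* s p"
    proof (rule less.hyps)
      show "nat (fst p + snd p - (fst s + snd s)) < nat (fst c + snd c - (fst s + snd s))"
        using min \<open>p \<in> P\<close> \<open>fst p + snd p = fst c + snd c - 1\<close> by fastforce
    qed fact
    ultimately show ?thesis by (simp add: rtranclp.rtrancl_into_rtrancl)
  qed simp
qed

lemma convex_D_free_polyomino_directed:
  assumes pol: "polyomino P" and cv: "convex P"
    and no_D: "\<And>x1 x2 y1 y2. \<lbrakk>x1 < x2; y2 < y1; (x1, y1) \<in> P; (x2, y1) \<in> P; (x2, y2) \<in> P\<rbrakk>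
                \<Longrightarrow> (x1, y2) \<in> P"
  shows "directed P"
proof -
  have "finite P" "P \<noteq> {}" using pol by (auto simp: polyomino_def)
  then obtain s where s: "s \<in> P" and min: "\<And>c. c \<in> P \<Longrightarrow> fst s + snd s \<le> fst c + snd c"
    using arg_min_if_finite[of P "\<lambda>c. fst c + snd c"] by (meson not_less)
  have corner_eq_s: "c = s" if "c \<in> P" "(fst c - 1, snd c) \<notin> P" "(fst c, snd c - 1) \<notin> P" for c
  proof -
    have "(fst s - 1, snd s) \<notin> P" "(fst s, snd s - 1) \<notin> P" using min by fastforce+
    then have "\<forall>x. (x, snd s) \<in> P \<longrightarrow> fst s \<le> x" "\<forall>p\<in>P. snd s \<le> snd p"
      using corner_is_bottom_left[OF pol cv no_D, where a = "fst s" and b = "snd s"] s by simp_all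
    moreover have "\<forall>x. (x, snd c) \<in> P \<longrightarrow> fst c \<le> x" "\<forall>p\<in>P. snd c \<le> snd p"
      using corner_is_bottom_left[OF pol cv no_D, where a = "fst c" and b = "snd c"] that by simp_all
    ultimately show "c = s"
      using s \<open>c \<in> P\<close> by (metis order_antisym prod.collapse)
  qed
  have "\<forall>c\<in>P. (ne_step P)\<^sup>*\<^sup>* s c"
    using ne_reachable_by_predecessors[of P s] min corner_eq_s by blast
  with s show ?thesis unfolding directed_def by blast
qed

theorem proposition13:
  shows "directed_convex_polyominoes = Av {H_pat, V_pat, D_pat}"
proof (intro set_eqI iffI)
  fix P assume "P \<in> directed_convex_polyominoes"
  then have pol: "polyomino P" and dir: "directed P" and cv: "convex P"
    by (auto simp: directed_convex_polyominoes_def)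
  then have fin: "finite P" by (simp add: polyomino_def)
  have "\<not> contains P D_pat"
    unfolding contains_D_pat_iff[OF fin]
    using directed_convex_fills_below[OF dir cv] by (meson less_imp_le)
  with pol cv show "P \<in> Av {H_pat, V_pat, D_pat}"
    by (simp add: Av_def convex_iff_avoids_H_V[OF fin])
next
  fix P assume "P \<in> Av {H_pat, V_pat, D_pat}"
  then have pol: "polyomino P" and avoids: "\<not> contains P H_pat" "\<not> contains P V_pat" "\<not> contains P D_pat"
    by (auto simp: Av_def)
  then have fin: "finite P" by (simp add: polyomino_def)
  have cv: "convex P" using convex_iff_avoids_H_V[OF fin] avoids(1,2) by simp
  have "directed P"
    using convex_D_free_polyomino_directed[OF pol cv] avoids(3)
    unfolding contains_D_pat_iff[OF fin] by blast
  with pol cv show "P \<in> directed_convex_polyominoes"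
    by (simp add: directed_convex_polyominoes_def)
qed

end
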